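(* Let $N$ be a race-free network state and $G$ a global type with $N\vdash_g G$. If $N\xrightarrow{(p,\lambda,q)}M$, then there exists a global type $G'$ such that $G\xRightarrow{(p,\lambda,q)}G'$ and $M\vdash_g G'$.
   Context: Session calculus. Threads: $P ::= \mathbf{end} \mid \bigoplus_{i\in I} p_i!\lambda_i;P_i \mid \sum_{i\in I} p_i?\lambda_i;P_i \mid X \mid \mu X.P$, $I$ finite (nonempty for $\bigoplus$), $\mu X.X$, $\mu X.\mu Y.P$ excluded. Networks: $N ::= p[\![P]\!] \mid 0 \mid N\parallel N$, with distinct locations, closed threads, every named location a location of $N$. Thread states additionally allow $\langle q!\lambda\rangle;P$; network states are built from thread states likewise, modulo $\equiv$ (associativity, commutativity of $\parallel$, unit $0$). $\mathrm{proc}(p,N)$ is the unique $P$ with $N\equiv p[\![P]\!]\parallel N'$. Transitions: least relation closed under $\equiv$ with (choice) $p[\![\bigoplus_{i\in I}p_i!\lambda_i;P_i]\!]\parallel N \xrightarrow{\tau} p[\![\langle p_k!\lambda_k\rangle;P_k]\!]\parallel N$ ($k\in I$); (unfold) $p[\![\mu X.P]\!]\parallel N\xrightarrow{\tau} p[\![P\{\mu X.P/X\}]\!]\parallel N$; (comm) $p_k[\![\langle q!\lambda_k\rangle;Q]\!]\parallel q[\![\sum_{i\in I}p_i?\lambda_i;P_i]\!]\parallel N \xrightarrow{(p_k,\lambda_k,q)} p_k[\![Q]\!]\parallel q[\![P_k]\!]\parallel N$ ($k\in I$). A network state has a race if $N\xrightarrow{(p,\lambda,r)}N'$ and $N\xrightarrow{(q,\mu,r)}N''$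 with $p\neq q$ or $N'\neq N''$; it is race-free if no state reachable from it has a race. Global types: $G ::= \mathbf{end} \mid \boxplus_{i\in I} p\to q_i{:}\lambda_i;G_i \mid X \mid \mu X.G$, $I$ finite nonempty, $p\neq q_i$, $\mu X.X$ and $\mu X.\mu Y.G$ excluded. Participants: $\mathrm{pt}(\mathbf{end})=\mathrm{pt}(X)=\emptyset$, $\mathrm{pt}(\mu X.G)=\mathrm{pt}(G)$, $\mathrm{pt}(\boxplus_{i\in I}p\to q_i{:}\lambda_i;G_i)=\bigcup_{i}(\{p,q_i\}\cup\mathrm{pt}(G_i))$. Projection types are like threads but with receives only of the unary form $p?\lambda;Q$, plus a merge $\sqcap_{i\in I}Q_i$. Projection $G\upharpoonright r$: $\mathbf{end}\upharpoonright r=\mathbf{end}$; $X\upharpoonright r=X$; $(\mu X.G)\upharpoonright r=\mathbf{end}$ if $r\notin\mathrm{pt}(G)$ and $\mu X.G$ is closed, else $\mu X.(G\upharpoonright r)$; $(\boxplus_{i\in I}p\to q_i{:}\lambda_i;G_i)\upharpoonright r$ equals $\bigoplus_{i\in I}q_i!\lambda_i;(G_i\upharpoonright r)$ if $r=p$, and otherwise $\sqcap_{i\in I}((p\to q_i{:}\lambda_i;G_i)\upharpoonright r)$, where $(p\to q{:}\lambda;G)\upharpoonright r$ is $p?\lambda;(G\upharpoonright r)$ if $r=q$ and $G\upharpoonright r$ if $r\notin\{p,q\}$. The judgement $P\vdash Q$ (thread state vs projection type) is the largest relation closed under: $P\{\mu X.P/X\}\vdash Q \Rightarrow \mu X.P\vdash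 Q$; $P\vdash Q\{\mu X.Q/X\}\Rightarrow P\vdash \mu X.Q$; $\mathbf{end}\vdash\mathbf{end}$; ($i\in I$, $P_i\vdash Q_i$) $\Rightarrow \sum_{i\in I}p_i?\lambda_i;P_i\vdash p_i?\lambda_i;Q_i$; ($I\subseteq J$, $P_i\vdash Q_i$ for all $i\in I$) $\Rightarrow \bigoplus_{i\in I}p_i!\lambda_i;P_i\vdash\bigoplus_{i\in J}p_i!\lambda_i;Q_i$; ($P\vdash Q_i$ for all $i\in I$) $\Rightarrow P\vdash\sqcap_{i\in I}Q_i$; ($k\in I$, $P_k\vdash Q_k$) $\Rightarrow \langle q_k!\lambda_k\rangle;P_k\vdash\bigoplus_{i\in I}q_i!\lambda_i;Q_i$. A projection type is guarded if every occurrence of a variable $X$ inside a subexpression $\mu X.Q$ lies within a subexpression $p!\lambda;Q'$ or $p?\lambda;Q'$. For a network state $N$ with locations $p_1,\dots,p_n$: $N\vdash G$ if $G$ is closed, $\mathrm{pt}(G)\subseteq\{p_1,\dots,p_n\}$ and $\mathrm{proc}(p_i,N)\vdash G\upharpoonright p_i$ for all $i$; $N\vdash_g G$ if moreover every $G\upharpoonright p_i$ is guarded. Transitions on global types $\xRightarrow{\alpha}$: the least relation with (1) $\boxplus_{i\in I}p\to q_i{:}\lambda_i;G_i\xRightarrow{(p,\lambda_k,q_k)}G_k$ for $k\in I$; (2) if $\emptyset\neq I\subseteq J$, $G_i\xRightarrow{(p,\lambda,q)}H_i$ for all $i\in I$, and $p,q\notin\{r\}\cup\{s_i\mid i\in I\}$,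 then $\boxplus_{i\in J}r\to s_i{:}\lambda_i;G_i\xRightarrow{(p,\lambda,q)}\boxplus_{i\in I}r\to s_i{:}\lambda_i;H_i$; (3) if $H\{\mu X.H/X\}\xRightarrow{\alpha}G$ then $\mu X.H\xRightarrow{\alpha}G$. *)

theory Defs
  imports Main
begin

text \<open>Finite indexed families (choices) are represented as lists of branches.
  The constructor TPend q l P is the thread state <q!l>;P.\<close>

datatype ('p, 'l) thread =
    TEnd
  | TSend "('p \<times> 'l \<times> ('p, 'l) thread) list"
  | TRecv "('p \<times> 'l \<times> ('p, 'l) thread) list"
  | TVar nat
  | TMu nat "('p, 'l) thread"
  | TPend 'p 'l "('p, 'l) thread"

primrec tsubst :: "nat \<Rightarrow> ('p,'l) thread \<Rightarrow> ('p,'l) thread \<Rightarrow> ('p,'l) thread" where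
  "tsubst X S TEnd = TEnd"
| "tsubst X S (TSend bs) = TSend (map (map_prod id (map_prod id (tsubst X S))) bs)"
| "tsubst X S (TRecv bs) = TRecv (map (map_prod id (map_prod id (tsubst X S))) bs)"
| "tsubst X S (TVar Y) = (if X = Y then S else TVar Y)"
| "tsubst X S (TMu Y P) = (if X = Y then TMu Y P else TMu Y (tsubst X S P))"
| "tsubst X S (TPend q l P) = TPend q l (tsubst X S P)"

primrec tfv :: "('p,'l) thread \<Rightarrow> nat set" where
  "tfv TEnd = {}"
| "tfv (TSend bs) = (\<Union>b\<in>set (map (map_prod id (map_prod id tfv)) bs). snd (snd b))"
| "tfv (TRecv bs) = (\<Union>b\<in>set (map (map_prod id (map_prod id tfv)) bs). snd (snd b))"
| "tfv (TVar Y) = {Y}"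
| "tfv (TMu Y P) = tfv P - {Y}"
| "tfv (TPend q l P) = tfv P"

primrec tlocs :: "('p,'l) thread \<Rightarrow> 'p set" where
  "tlocs TEnd = {}"
| "tlocs (TSend bs) = (\<Union>b\<in>set (map (map_prod id (map_prod id tlocs)) bs). {fst b} \<union> snd (snd b))"
| "tlocs (TRecv bs) = (\<Union>b\<in>set (map (map_prod id (map_prod id tlocs)) bs). {fst b} \<union> snd (snd b))"
| "tlocs (TVar Y) = {}"
| "tlocs (TMu Y P) = tlocs P"
| "tlocs (TPend q l P) = {q} \<union> tlocs P"

primrec is_thread :: "('p,'l) thread \<Rightarrow> bool" where
  "is_thread TEnd = True"
| "is_thread (TSend bs) = (bs \<noteq> [] \<and> (\<forall>b\<in>set (map (map_prod id (map_prod id is_thread)) bs). snd (snd b)))"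
| "is_thread (TRecv bs) = (\<forall>b\<in>set (map (map_prod id (map_prod id is_thread)) bs). snd (snd b))"
| "is_thread (TVar Y) = True"
| "is_thread (TMu Y P) = (P \<noteq> TVar Y \<and> (\<forall>Z Q. P \<noteq> TMu Z Q) \<and> is_thread P)"
| "is_thread (TPend q l P) = False"

definition is_tstate :: "('p,'l) thread \<Rightarrow> bool" where
  "is_tstate P \<longleftrightarrow> is_thread P \<or> (\<exists>q l Q. P = TPend q l Q \<and> is_thread Q)"

text \<open>A network state modulo structural congruence (associativity, commutativity, unit 0,
  distinct locations) is represented as a finite partial map from locations to thread states.\<close>

type_synonym ('p,'l) net = "'p \<Rightarrow> ('p,'l) thread option"

definition is_netstate :: "('p,'l) net \<Rightarrow> bool" where
  "is_netstate N \<longleftrightarrow> finite (dom N) \<and>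
     (\<forall>p P. N p = Some P \<longrightarrow> is_tstate P \<and> tfv P = {} \<and> tlocs P \<subseteq> dom N)"

datatype ('p,'l) act = Tau | Comm 'p 'l 'p

inductive nstep :: "('p,'l) net \<Rightarrow> ('p,'l) act \<Rightarrow> ('p,'l) net \<Rightarrow> bool" where
  choice: "\<lbrakk>N p = Some (TSend bs); k < length bs; bs ! k = (q, l, P)\<rbrakk>
           \<Longrightarrow> nstep N Tau (N(p \<mapsto> TPend q l P))"
| unfold: "N p = Some (TMu X P) \<Longrightarrow> nstep N Tau (N(p \<mapsto> tsubst X (TMu X P) P))"
| comm: "\<lbrakk>N p = Some (TPend q l Q); N q = Some (TRecv bs); k < length bs; bs ! k = (p, l, P)\<rbrakk>
           \<Longrightarrow> nstep N (Comm p l q) (N(p \<mapsto> Q, q \<mapsto> P))"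

definition nreach :: "('p,'l) net \<Rightarrow> ('p,'l) net \<Rightarrow> bool" where
  "nreach = (\<lambda>N M. \<exists>a. nstep N a M)\<^sup>*\<^sup>*"

definition has_race :: "('p,'l) net \<Rightarrow> bool" where
  "has_race N \<longleftrightarrow> (\<exists>p l r N' q m N''. nstep N (Comm p l r) N' \<and> nstep N (Comm q m r) N''
                      \<and> (p \<noteq> q \<or> N' \<noteq> N''))"

definition race_free :: "('p,'l) net \<Rightarrow> bool" where
  "race_free N \<longleftrightarrow> (\<forall>M. nreach N M \<longrightarrow> \<not> has_race M)"

datatype ('p,'l) gtype =
    GEnd
  | GChoice 'p "('p \<times> 'l \<times> ('p,'l) gtype) list"
  | GVar nat
  | GMu nat "('p,'l) gtype"

primrec gsubst :: "nat \<Rightarrow> ('p,'l) gtype \<Rightarrow> ('p,'l) gtype \<Rightarrow> ('p,'l) gtype" where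
  "gsubst X S GEnd = GEnd"
| "gsubst X S (GChoice p bs) = GChoice p (map (map_prod id (map_prod id (gsubst X S))) bs)"
| "gsubst X S (GVar Y) = (if X = Y then S else GVar Y)"
| "gsubst X S (GMu Y G) = (if X = Y then GMu Y G else GMu Y (gsubst X S G))"

primrec gfv :: "('p,'l) gtype \<Rightarrow> nat set" where
  "gfv GEnd = {}"
| "gfv (GChoice p bs) = (\<Union>b\<in>set (map (map_prod id (map_prod id gfv)) bs). snd (snd b))"
| "gfv (GVar Y) = {Y}"
| "gfv (GMu Y G) = gfv G - {Y}"

primrec pt :: "('p,'l) gtype \<Rightarrow> 'p set" where
  "pt GEnd = {}"
| "pt (GChoice p bs) = (\<Union>b\<in>set (map (map_prod id (map_prod id pt)) bs). {p, fst b} \<union> snd (snd b))"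
| "pt (GVar Y) = {}"
| "pt (GMu Y G) = pt G"

primrec wf_gtype :: "('p,'l) gtype \<Rightarrow> bool" where
  "wf_gtype GEnd = True"
| "wf_gtype (GChoice p bs) = (bs \<noteq> [] \<and> (\<forall>b\<in>set (map (map_prod id (map_prod id wf_gtype)) bs). p \<noteq> fst b \<and> snd (snd b)))"
| "wf_gtype (GVar Y) = True"
| "wf_gtype (GMu Y G) = (G \<noteq> GVar Y \<and> (\<forall>Z H. G \<noteq> GMu Z H) \<and> wf_gtype G)"

datatype ('p,'l) ptype =
    PEnd
  | PSend "('p \<times> 'l \<times> ('p,'l) ptype) list"
  | PRecv 'p 'l "('p,'l) ptype"
  | PVar nat
  | PMu nat "('p,'l) ptype"
  | PMerge "('p,'l) ptype list"

primrec psubst :: "nat \<Rightarrow> ('p,'l) ptype \<Rightarrow> ('p,'l) ptype \<Rightarrow> ('p,'l) ptype" where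
  "psubst X S PEnd = PEnd"
| "psubst X S (PSend bs) = PSend (map (map_prod id (map_prod id (psubst X S))) bs)"
| "psubst X S (PRecv p l Q) = PRecv p l (psubst X S Q)"
| "psubst X S (PVar Y) = (if X = Y then S else PVar Y)"
| "psubst X S (PMu Y Q) = (if X = Y then PMu Y Q else PMu Y (psubst X S Q))"
| "psubst X S (PMerge qs) = PMerge (map (psubst X S) qs)"

primrec proj :: "('p,'l) gtype \<Rightarrow> 'p \<Rightarrow> ('p,'l) ptype" where
  "proj GEnd r = PEnd"
| "proj (GVar X) r = PVar X"
| "proj (GMu X G) r =
     (if r \<notin> pt G \<and> gfv (GMu X G) = {} then PEnd else PMu X (proj G r))"
| "proj (GChoice p bs) r =
     (let ps = map (map_prod id (map_prod id (\<lambda>G. proj G r))) bs in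
      if r = p then PSend ps
      else PMerge (map (\<lambda>(q,l,Q). if r = q then PRecv p l Q else Q) ps))"

primrec unguarded :: "nat \<Rightarrow> ('p,'l) ptype \<Rightarrow> bool" where
  "unguarded X PEnd = False"
| "unguarded X (PSend bs) = False"
| "unguarded X (PRecv p l Q) = False"
| "unguarded X (PVar Y) = (X = Y)"
| "unguarded X (PMu Y Q) = (X \<noteq> Y \<and> unguarded X Q)"
| "unguarded X (PMerge qs) = (\<exists>Q\<in>set (map (unguarded X) qs). Q)"

primrec guarded :: "('p,'l) ptype \<Rightarrow> bool" where
  "guarded PEnd = True"
| "guarded (PSend bs) = (\<forall>b\<in>set (map (map_prod id (map_prod id guarded)) bs). snd (snd b))"
| "guarded (PRecv p l Q) = guarded Q"
| "guarded (PVar Y) = True"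
| "guarded (PMu Y Q) = (\<not> unguarded Y Q \<and> guarded Q)"
| "guarded (PMerge qs) = (\<forall>Q\<in>set (map guarded qs). Q)"

coinductive tj :: "('p,'l) thread \<Rightarrow> ('p,'l) ptype \<Rightarrow> bool" where
  mu_l: "tj (tsubst X (TMu X P) P) Q \<Longrightarrow> tj (TMu X P) Q"
| mu_r: "tj P (psubst X (PMu X Q) Q) \<Longrightarrow> tj P (PMu X Q)"
| endr: "tj TEnd PEnd"
| recv: "\<lbrakk>k < length bs; bs ! k = (p, l, P); tj P Q\<rbrakk> \<Longrightarrow> tj (TRecv bs) (PRecv p l Q)"
| send: "\<lbrakk>inj_on f {..<length bs};
          \<forall>i<length bs. f i < length cs \<and> fst (cs ! f i) = fst (bs ! i)
                 \<and> fst (snd (cs ! f i)) = fst (snd (bs ! i))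
                 \<and> tj (snd (snd (bs ! i))) (snd (snd (cs ! f i)))\<rbrakk>
          \<Longrightarrow> tj (TSend bs) (PSend cs)"
| merge: "\<forall>Q\<in>set qs. tj P Q \<Longrightarrow> tj P (PMerge qs)"
| pend: "\<lbrakk>k < length cs; cs ! k = (q, l, Q); tj P Q\<rbrakk> \<Longrightarrow> tj (TPend q l P) (PSend cs)"

definition net_typ :: "('p,'l) net \<Rightarrow> ('p,'l) gtype \<Rightarrow> bool" where
  "net_typ N G \<longleftrightarrow> gfv G = {} \<and> pt G \<subseteq> dom N \<and>
     (\<forall>p P. N p = Some P \<longrightarrow> tj P (proj G p))"

definition net_typ_g :: "('p,'l) net \<Rightarrow> ('p,'l) gtype \<Rightarrow> bool" where
  "net_typ_g N G \<longleftrightarrow> net_typ N G \<and> (\<forall>p\<in>dom N. guarded (proj G p))"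

text \<open>A sub-family indexed by I \<subseteq> J is given by a nonempty list of distinct indices into the branch list.\<close>
inductive gstep :: "('p,'l) gtype \<Rightarrow> 'p \<times> 'l \<times> 'p \<Rightarrow> ('p,'l) gtype \<Rightarrow> bool" where
  top: "\<lbrakk>k < length bs; bs ! k = (q, l, G)\<rbrakk> \<Longrightarrow> gstep (GChoice p bs) (p, l, q) G"
| deep: "\<lbrakk>is \<noteq> []; distinct is; \<forall>i\<in>set is. i < length bs;
          length hs = length is;
          \<forall>j<length is. gstep (snd (snd (bs ! (is ! j)))) (p, l, q) (hs ! j);
          p \<noteq> r; q \<noteq> r; \<forall>i\<in>set is. p \<noteq> fst (bs ! i) \<and> q \<noteq> fst (bs ! i)\<rbrakk>
          \<Longrightarrow> gstep (GChoice r bs) (p, l, q)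
                (GChoice r (map (\<lambda>j. (fst (bs ! (is ! j)), fst (snd (bs ! (is ! j))), hs ! j))
                               [0..<length is]))"
| mu: "gstep (gsubst X (GMu X H) H) a G \<Longrightarrow> gstep (GMu X H) a G"

end

theory Submission
  imports Defs
begin

text \<open>
  The proof is by well-founded induction on how far the output of p lies inside G, i.e. on
  the number of unfoldings and of choices by other participants before p's choice, generalised
  to all networks reachable from N. If G starts with p's choice, the pending output of p selects a
  branch of G; race freedom forces q to receive in the branch that the projection on q prescribes.
  A recursion is unfolded, which decreases the measure because p's projection is guarded.
  If G starts with a choice of r \<noteq> p, the thread of r, after unfolding, offers a subfamily of
  the branches of G. For each of them, let r and the receiver s of that branch communicate:
  the resulting reachable network is typed by the continuation of G, typing and race freedom
  show s \<notin> {p, q}, and the induction hypothesis yields the step of the continuation. These steps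
  assemble into a step of G by the rule that commutes independent communications.
\<close>

lemma thread_induct[case_names TEnd TSend TRecv TVar TMu TPend]:
  assumes "P TEnd"
    and "\<And>bs. (\<And>q l R. (q, l, R) \<in> set bs \<Longrightarrow> P R) \<Longrightarrow> P (TSend bs)"
    and "\<And>bs. (\<And>q l R. (q, l, R) \<in> set bs \<Longrightarrow> P R) \<Longrightarrow> P (TRecv bs)"
    and "\<And>X. P (TVar X)"
    and "\<And>X R. P R \<Longrightarrow> P (TMu X R)"
    and "\<And>q l R. P R \<Longrightarrow> P (TPend q l R)"
  shows "P T"
  by (induction T rule: thread.induct) (use assms in \<open>fastforce simp: snds.simps\<close>)+

lemma gtype_induct[case_names GEnd GChoice GVar GMu]:
  assumes "P GEnd"
    and "\<And>r bs. (\<And>s m H. (s, m, H) \<in> set bs \<Longrightarrow> P H) \<Longrightarrow> P (GChoice r bs)"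
    and "\<And>X. P (GVar X)"
    and "\<And>X H. P H \<Longrightarrow> P (GMu X H)"
  shows "P G"
  by (induction G rule: gtype.induct) (use assms in \<open>fastforce simp: snds.simps\<close>)+

lemma ptype_induct[case_names PEnd PSend PRecv PVar PMu PMerge]:
  assumes "P PEnd"
    and "\<And>bs. (\<And>q l R. (q, l, R) \<in> set bs \<Longrightarrow> P R) \<Longrightarrow> P (PSend bs)"
    and "\<And>p l R. P R \<Longrightarrow> P (PRecv p l R)"
    and "\<And>X. P (PVar X)"
    and "\<And>X R. P R \<Longrightarrow> P (PMu X R)"
    and "\<And>qs. (\<And>R. R \<in> set qs \<Longrightarrow> P R) \<Longrightarrow> P (PMerge qs)"
  shows "P Q"
  by (induction Q rule: ptype.induct) (use assms in \<open>fastforce simp: snds.simps\<close>)+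

section \<open>Contractive threads and their unfolding\<close>

primrec tunguarded :: "nat \<Rightarrow> ('p,'l) thread \<Rightarrow> bool" where
  "tunguarded X TEnd = False"
| "tunguarded X (TSend bs) = False"
| "tunguarded X (TRecv bs) = False"
| "tunguarded X (TVar Y) = (X = Y)"
| "tunguarded X (TMu Y P) = (X \<noteq> Y \<and> tunguarded X P)"
| "tunguarded X (TPend q l P) = False"

primrec tcontractive :: "('p,'l) thread \<Rightarrow> bool" where
  "tcontractive TEnd = True"
| "tcontractive (TSend bs) = (\<forall>b\<in>set (map (map_prod id (map_prod id tcontractive)) bs). snd (snd b))"
| "tcontractive (TRecv bs) = (\<forall>b\<in>set (map (map_prod id (map_prod id tcontractive)) bs). snd (snd b))"
| "tcontractive (TVar Y) = True"
| "tcontractive (TMu Y P) = (\<not> tunguarded Y P \<and> tcontractive P)"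
| "tcontractive (TPend q l P) = tcontractive P"

primrec tsend_nonempty :: "('p,'l) thread \<Rightarrow> bool" where
  "tsend_nonempty TEnd = True"
| "tsend_nonempty (TSend bs) = (bs \<noteq> [] \<and> (\<forall>b\<in>set (map (map_prod id (map_prod id tsend_nonempty)) bs). snd (snd b)))"
| "tsend_nonempty (TRecv bs) = (\<forall>b\<in>set (map (map_prod id (map_prod id tsend_nonempty)) bs). snd (snd b))"
| "tsend_nonempty (TVar Y) = True"
| "tsend_nonempty (TMu Y P) = tsend_nonempty P"
| "tsend_nonempty (TPend q l P) = tsend_nonempty P"

primrec tmu_depth :: "('p,'l) thread \<Rightarrow> nat" where
  "tmu_depth TEnd = 0"
| "tmu_depth (TSend bs) = 0"
| "tmu_depth (TRecv bs) = 0"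
| "tmu_depth (TVar Y) = 0"
| "tmu_depth (TMu Y P) = Suc (tmu_depth P)"
| "tmu_depth (TPend q l P) = 0"

text \<open>is_thread is not preserved by unfolding, which can create \<mu>Y.\<mu>X.P; the conditions of
  good_thread are.\<close>

definition good_thread :: "('p,'l) thread \<Rightarrow> bool" where
  "good_thread T \<longleftrightarrow> tfv T = {} \<and> tcontractive T \<and> tsend_nonempty T"

lemma tfv_tsubst: "tfv (tsubst X S P) \<subseteq> tfv P - {X} \<union> tfv S"
proof (induction P rule: thread_induct)
  case (TSend bs)
  then show ?case by (fastforce split: prod.splits)
next
  case (TRecv bs)
  then show ?case by (fastforce split: prod.splits)
qed auto

lemma tunguarded_tfv: "tunguarded X P \<Longrightarrow> X \<in> tfv P"
  by (induction P rule: thread_induct) auto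

lemma tunguarded_tsubst: "tunguarded Y (tsubst X S P) \<Longrightarrow> tunguarded Y P \<or> (tunguarded X P \<and> tunguarded Y S)"
  by (induction P rule: thread_induct) (auto split: if_splits)

lemma tcontractive_tsubst:
  "tcontractive P \<Longrightarrow> tcontractive S \<Longrightarrow> tfv S = {} \<Longrightarrow> tcontractive (tsubst X S P)"
proof (induction P rule: thread_induct)
  case (TMu Y P)
  then show ?case using tunguarded_tsubst[of Y X S P] tunguarded_tfv[of Y S] by auto
qed fastforce+

lemma tsend_nonempty_tsubst: "tsend_nonempty P \<Longrightarrow> tsend_nonempty S \<Longrightarrow> tsend_nonempty (tsubst X S P)"
  by (induction P rule: thread_induct) fastforce+

lemma tmu_depth_tsubst: "\<not> tunguarded X P \<Longrightarrow> tmu_depth (tsubst X S P) = tmu_depth P"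
  by (induction P rule: thread_induct) auto

lemma good_thread_unfold: "good_thread (TMu X P) \<Longrightarrow> good_thread (tsubst X (TMu X P) P)"
  unfolding good_thread_def using tfv_tsubst[of X "TMu X P" P] tcontractive_tsubst tsend_nonempty_tsubst
  by (metis Diff_empty Un_empty_right subset_empty tfv.simps(5) tcontractive.simps(5) tsend_nonempty.simps(5))

lemma tmu_depth_unfold: "good_thread (TMu X P) \<Longrightarrow> tmu_depth (tsubst X (TMu X P) P) < tmu_depth (TMu X P)"
  unfolding good_thread_def by (simp add: tmu_depth_tsubst)

lemma good_thread_continuation:
  "good_thread (TSend bs) \<Longrightarrow> (q, l, R) \<in> set bs \<Longrightarrow> good_thread R"
  "good_thread (TRecv bs) \<Longrightarrow> (q, l, R) \<in> set bs \<Longrightarrow> good_thread R"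
  "good_thread (TPend q l R) \<Longrightarrow> good_thread R"
  unfolding good_thread_def by force+

lemma is_thread_contractive: "is_thread T \<Longrightarrow> tcontractive T \<and> tsend_nonempty T"
proof (induction T rule: thread_induct)
  case (TMu X R)
  then show ?case by (cases R) auto
qed fastforce+

lemma is_tstate_good_thread: "is_tstate T \<Longrightarrow> tfv T = {} \<Longrightarrow> good_thread T"
  unfolding is_tstate_def good_thread_def using is_thread_contractive by fastforce

inductive unfolds_to :: "('p,'l) thread \<Rightarrow> ('p,'l) thread \<Rightarrow> bool" where
  refl: "unfolds_to T T"
| step: "unfolds_to (tsubst X (TMu X P) P) T \<Longrightarrow> unfolds_to (TMu X P) T"

lemma unfolds_to_non_mu:
  "good_thread T \<Longrightarrow> \<exists>T'. unfolds_to T T' \<and> good_thread T' \<and> (\<forall>X P. T' \<noteq> TMu X P)"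
proof (induction "tmu_depth T" arbitrary: T rule: less_induct)
  case less
  show ?case
  proof (cases T)
    case (TMu X P)
    then show ?thesis
      using less good_thread_unfold tmu_depth_unfold unfolds_to.step by metis
  qed (use less unfolds_to.refl in blast)+
qed

section \<open>Properties of the typing judgement\<close>

lemma tj_TMu_unfold: "tj (TMu X P) Q \<Longrightarrow> tj (tsubst X (TMu X P) P) Q"
  apply (coinduction arbitrary: X P Q rule: tj.coinduct)
  apply (erule tj.cases; simp)
    apply (erule tj.cases; fastforce)
  by blast+

lemma tj_PMerge_member:
  assumes "tj T (PMerge qs)" "Q \<in> set qs" shows "tj T Q"
  apply (rule tj.coinduct[where X="\<lambda>T Q. \<exists>qs. tj T (PMerge qs) \<and> Q \<in> set qs"])
   apply (use assms in blast)
  apply (elim exE conjE)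
  apply (erule tj.cases)
        apply simp_all
   apply blast
  apply (drule (1) bspec)
  by (erule tj.cases) auto

lemma tj_PMerge_iff: "tj T (PMerge qs) \<longleftrightarrow> (\<forall>Q\<in>set qs. tj T Q)"
  using tj.merge tj_PMerge_member by blast

lemma tj_PMu_unfold:
  assumes "tj T (PMu X Q)" shows "tj T (psubst X (PMu X Q) Q)"
  apply (rule tj.coinduct[where X="\<lambda>T Q'. \<exists>X Q. tj T (PMu X Q) \<and> Q' = psubst X (PMu X Q) Q"])
   apply (use assms in blast)
  apply (elim exE conjE)
  apply (erule tj.cases)
        apply simp_all
   apply blast
  by (erule tj.cases) auto

inductive end_like :: "('p,'l) ptype \<Rightarrow> bool" where
  "end_like PEnd"
| "(\<And>Q. Q \<in> set qs \<Longrightarrow> end_like Q) \<Longrightarrow> end_like (PMerge qs)"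

lemma tj_end_like: "tj T PEnd \<Longrightarrow> end_like Q \<Longrightarrow> tj T Q"
proof (coinduction arbitrary: T Q rule: tj.coinduct)
  case (tj T Q)
  show ?case
  proof (cases "\<exists>X P. T = TMu X P")
    case True
    with tj show ?thesis by (auto elim: tj.cases)
  next
    case False
    from tj(2) show ?thesis
      by cases (use tj(1) False in \<open>auto elim: tj.cases\<close>)
  qed
qed

lemma unfolds_to_tj_iff: "unfolds_to T T' \<Longrightarrow> tj T Q \<longleftrightarrow> tj T' Q"
  by (induction rule: unfolds_to.induct) (auto dest: tj_TMu_unfold intro: tj.mu_l)

lemma tj_TPend_PSend:
  "tj (TPend q l P) (PSend cs) \<Longrightarrow> \<exists>k Q. k < length cs \<and> cs ! k = (q, l, Q) \<and> tj P Q"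
  by (erule tj.cases) auto

lemma tj_TSend_PSend:
  "tj (TSend bs) (PSend cs) \<Longrightarrow> \<exists>f. inj_on f {..<length bs} \<and>
     (\<forall>i<length bs. f i < length cs \<and> fst (cs ! f i) = fst (bs ! i)
        \<and> fst (snd (cs ! f i)) = fst (snd (bs ! i))
        \<and> tj (snd (snd (bs ! i))) (snd (snd (cs ! f i))))"
  by (erule tj.cases) auto

lemma tj_TRecv_PRecv:
  "tj (TRecv bs) (PRecv p l Q) \<Longrightarrow> \<exists>k P. k < length bs \<and> bs ! k = (p, l, P) \<and> tj P Q"
  by (erule tj.cases) auto

lemma tj_mismatch:
  "\<not> tj (TPend q l P) (PRecv p m Q)"
  "\<not> tj (TPend q l P) PEnd"
  "\<not> tj (TRecv bs) (PSend cs)"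
  "\<not> tj (TSend bs) (PRecv p m Q)"
  "\<not> tj TEnd (PSend cs)"
  "\<not> tj TEnd (PRecv p m Q)"
  by (auto elim: tj.cases)

section \<open>Reachability and races\<close>

lemma nreach_refl: "nreach N N"
  unfolding nreach_def by simp

lemma nreach_step: "nreach N N' \<Longrightarrow> nstep N' a N'' \<Longrightarrow> nreach N N''"
  unfolding nreach_def by (rule rtranclp.rtrancl_into_rtrancl) blast+

lemma nreach_trans: "nreach N N' \<Longrightarrow> nreach N' N'' \<Longrightarrow> nreach N N''"
  unfolding nreach_def by simp

lemma race_free_nreach: "race_free N \<Longrightarrow> nreach N N' \<Longrightarrow> race_free N'"
  unfolding race_free_def using nreach_trans by blast

lemma race_free_comm_unique:
  assumes "race_free N" "nstep N (Comm p l r) N'" "nstep N (Comm q m r) N''"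
  shows "p = q \<and> N' = N''"
  using assms nreach_refl unfolding race_free_def has_race_def by blast

lemma unfolds_to_nreach: "unfolds_to T T' \<Longrightarrow> N t = Some T \<Longrightarrow> nreach N (N(t \<mapsto> T'))"
proof (induction arbitrary: N rule: unfolds_to.induct)
  case (refl T)
  then show ?case by (simp add: map_upd_triv nreach_refl)
next
  case (step X P T)
  let ?N' = "N(t \<mapsto> tsubst X (TMu X P) P)"
  have "nreach N ?N'"
    using nstep.unfold[of N t X P, OF step.prems] nreach_step nreach_refl by blast
  moreover have "nreach ?N' (N(t \<mapsto> T))"
    using step.IH[of ?N'] by (simp only: fun_upd_upd fun_upd_same)
  ultimately show ?case by (rule nreach_trans)
qed

section \<open>Substitution and projection of global types\<close>

text \<open>Like is_thread, wf_gtype is not preserved by unfolding; wf_choices keeps only the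
  conditions on choices, which are.\<close>

primrec wf_choices :: "('p,'l) gtype \<Rightarrow> bool" where
  "wf_choices GEnd = True"
| "wf_choices (GChoice p bs) = (bs \<noteq> [] \<and> (\<forall>b\<in>set (map (map_prod id (map_prod id wf_choices)) bs). p \<noteq> fst b \<and> snd (snd b)))"
| "wf_choices (GVar Y) = True"
| "wf_choices (GMu Y G) = wf_choices G"

primrec pfv :: "('p,'l) ptype \<Rightarrow> nat set" where
  "pfv PEnd = {}"
| "pfv (PSend bs) = (\<Union>b\<in>set (map (map_prod id (map_prod id pfv)) bs). snd (snd b))"
| "pfv (PRecv p l Q) = pfv Q"
| "pfv (PVar Y) = {Y}"
| "pfv (PMu Y Q) = pfv Q - {Y}"
| "pfv (PMerge qs) = (\<Union>Q\<in>set (map pfv qs). Q)"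

lemma wf_gtype_wf_choices: "wf_gtype G \<Longrightarrow> wf_choices G"
  by (induction G rule: gtype_induct) fastforce+

lemma wf_choices_gsubst: "wf_choices H \<Longrightarrow> wf_choices S \<Longrightarrow> wf_choices (gsubst X S H)"
  by (induction H rule: gtype_induct) fastforce+

lemma gfv_gsubst: "gfv (gsubst X S H) \<subseteq> gfv H - {X} \<union> gfv S"
proof (induction H rule: gtype_induct)
  case (GChoice r bs)
  then show ?case by (fastforce split: prod.splits)
qed auto

lemma gsubst_id: "X \<notin> gfv H \<Longrightarrow> gsubst X S H = H"
  by (induction H rule: gtype_induct) (auto intro!: map_idI)

lemma pt_GChoice:
  "x \<in> pt (GChoice r bs) \<longleftrightarrow> bs \<noteq> [] \<and> (x = r \<or> (\<exists>s m H. (s, m, H) \<in> set bs \<and> (x = s \<or> x \<in> pt H)))"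
  by (cases bs) force+

lemma pt_GChoice_branch:
  "(s, m, H) \<in> set bs \<Longrightarrow> r \<in> pt (GChoice r bs) \<and> s \<in> pt (GChoice r bs) \<and> pt H \<subseteq> pt (GChoice r bs)"
  unfolding pt_GChoice by auto

lemma pt_gsubst: "pt (gsubst X S H) \<subseteq> pt H \<union> pt S"
proof (induction H rule: gtype_induct)
  case (GChoice r bs)
  show ?case
  proof
    fix x assume "x \<in> pt (gsubst X S (GChoice r bs))"
    then have "bs \<noteq> []" "x = r \<or> (\<exists>s m H. (s, m, H) \<in> set bs \<and> (x = s \<or> x \<in> pt (gsubst X S H)))"
      unfolding gsubst.simps pt_GChoice by force+
    then show "x \<in> pt (GChoice r bs) \<union> pt S" using GChoice unfolding Un_iff pt_GChoice by blast
  qed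
qed auto

lemma pt_gsubst_free: "X \<in> gfv H \<Longrightarrow> pt S \<subseteq> pt (gsubst X S H)"
  by (induction H rule: gtype_induct) force+

lemma pfv_proj: "pfv (proj H t) \<subseteq> gfv H"
proof (induction H rule: gtype_induct)
  case (GChoice r bs)
  show ?case
  proof
    fix x assume "x \<in> pfv (proj (GChoice r bs) t)"
    then obtain s m H where "(s, m, H) \<in> set bs" "x \<in> pfv (proj H t)"
      by (auto simp: Let_def split: if_splits)
    then show "x \<in> gfv (GChoice r bs)" using GChoice by force
  qed
qed auto

lemma psubst_id: "X \<notin> pfv Q \<Longrightarrow> psubst X S Q = Q"
  by (induction Q rule: ptype_induct) (auto intro!: map_idI)

lemma proj_gsubst: "t \<in> pt S \<Longrightarrow> proj (gsubst X S H) t = psubst X (proj S t) (proj H t)"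
proof (induction H rule: gtype_induct)
  case (GChoice r bs)
  then show ?case by (auto simp: Let_def)
next
  case (GMu Y H)
  show ?case
  proof (cases "X \<noteq> Y \<and> X \<in> gfv H")
    case True
    then have "t \<in> pt (gsubst X S H)" using pt_gsubst_free GMu.prems by blast
    with True GMu show ?thesis by auto
  next
    case False
    moreover have "X \<notin> gfv H \<Longrightarrow> X \<notin> pfv (proj H t)" using pfv_proj[of H t] by blast
    ultimately show ?thesis by (auto simp: gsubst_id psubst_id)
  qed
qed auto

lemma unguarded_pfv: "unguarded Y Q \<Longrightarrow> Y \<in> pfv Q"
  by (induction Q rule: ptype_induct) auto

lemma unguarded_psubst:
  "unguarded Y (psubst X S Q) \<Longrightarrow> unguarded Y Q \<or> (unguarded X Q \<and> unguarded Y S)"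
  by (induction Q rule: ptype_induct) (auto split: if_splits)

lemma guarded_psubst: "guarded Q \<Longrightarrow> guarded S \<Longrightarrow> pfv S = {} \<Longrightarrow> guarded (psubst X S Q)"
proof (induction Q rule: ptype_induct)
  case (PMu Y Q)
  then show ?case using unguarded_psubst[of Y X S Q] unguarded_pfv[of Y S] by auto
qed fastforce+

lemma end_like_guarded: "end_like Q \<Longrightarrow> guarded Q"
  by (induction rule: end_like.induct) auto

lemma end_like_proj: "t \<notin> pt G \<Longrightarrow> gfv G = {} \<Longrightarrow> wf_choices G \<Longrightarrow> end_like (proj G t)"
proof (induction G rule: gtype_induct)
  case (GChoice r bs)
  then have "t \<noteq> r" by (simp add: pt_GChoice)
  moreover have "t \<noteq> s \<and> end_like (proj H t)" if "(s, m, H) \<in> set bs" for s m H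
  proof -
    have "t \<noteq> s" "t \<notin> pt H" "gfv H = {}" "wf_choices H"
      using that GChoice(2-4) by (force simp: pt_GChoice)+
    then show ?thesis using GChoice(1)[OF that] by blast
  qed
  ultimately show ?case by (auto simp: Let_def intro!: end_like.intros)
qed (auto intro: end_like.intros)

lemma proj_GChoice_self: "proj (GChoice r bs) r = PSend (map (\<lambda>(s, m, H). (s, m, proj H r)) bs)"
  by (auto simp: Let_def)

lemma proj_GChoice_other:
  "t \<noteq> r \<Longrightarrow> proj (GChoice r bs) t =
     PMerge (map (\<lambda>(s, m, H). if t = s then PRecv r m (proj H t) else proj H t) bs)"
  by (auto simp: Let_def)

lemma tj_proj_GChoice_other:
  "t \<noteq> r \<Longrightarrow> tj T (proj (GChoice r bs) t) \<longleftrightarrow>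
     (\<forall>(s, m, H)\<in>set bs. tj T (if t = s then PRecv r m (proj H t) else proj H t))"
  by (auto simp: proj_GChoice_other tj_PMerge_iff)

lemma guarded_proj_GChoice:
  "guarded (proj (GChoice r bs) t) \<longleftrightarrow> (\<forall>(s, m, H)\<in>set bs. guarded (proj H t))"
proof (cases "t = r")
  case True
  then show ?thesis by (force simp: proj_GChoice_self)
next
  case False
  then show ?thesis by (simp del: proj.simps add: proj_GChoice_other split_beta) metis
qed

lemma tj_proj_GChoice_branch:
  assumes "t \<noteq> r" "tj T (proj (GChoice r bs) t)" "(s, m, H) \<in> set bs"
  shows "tj T (if t = s then PRecv r m (proj H t) else proj H t)"
  using assms unfolding tj_proj_GChoice_other[OF assms(1)] by fastforce

declare proj.simps(4) [simp del] proj_GChoice_self [simp] proj_GChoice_other [simp]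

text \<open>The measure ignores branches in which p receives: such receives guard the projection
  on p, so unfolding a recursion that is guarded there does not change the measure.\<close>

primrec output_depth :: "'p \<Rightarrow> ('p,'l) gtype \<Rightarrow> nat" where
  "output_depth p GEnd = 0"
| "output_depth p (GChoice r bs) = (if r = p then 0 else
     Suc (foldr max (map (\<lambda>b. if fst b = p then 0 else snd (snd b))
       (map (map_prod id (map_prod id (output_depth p))) bs)) 0))"
| "output_depth p (GVar Y) = 0"
| "output_depth p (GMu Y G) = Suc (output_depth p G)"

lemma output_depth_branch:
  assumes "r \<noteq> p" "(s, m, H) \<in> set bs" "s \<noteq> p"
  shows "output_depth p H < output_depth p (GChoice r bs)"
proof -
  have foldr_max_ge: "x \<in> set xs \<Longrightarrow> x \<le> foldr max xs (0::nat)" for x xs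
    by (induction xs) auto
  have "output_depth p H \<in> set (map (\<lambda>b. if fst b = p then 0 else snd (snd b))
      (map (map_prod id (map_prod id (output_depth p))) bs))"
    using assms by force
  then show ?thesis using assms foldr_max_ge by fastforce
qed

lemma output_depth_gsubst:
  "\<not> unguarded X (proj H p) \<Longrightarrow> output_depth p (gsubst X S H) = output_depth p H"
proof (induction H rule: gtype_induct)
  case (GChoice r bs)
  show ?case
  proof (cases "r = p")
    case False
    have "output_depth p (gsubst X S H) = output_depth p H" if "(s, m, H) \<in> set bs" "s \<noteq> p" for s m H
      using GChoice False that by (force simp: Let_def)
    then have "map (\<lambda>b. if fst b = p then 0 else snd (snd b))
        (map (map_prod id (map_prod id (output_depth p))) (map (map_prod id (map_prod id (gsubst X S))) bs))
      = map (\<lambda>b. if fst b = p then 0 else snd (snd b)) (map (map_prod id (map_prod id (output_depth p))) bs)"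
      by (auto intro!: map_cong)
    then show ?thesis by (simp only: gsubst.simps output_depth.simps)
  qed simp
next
  case (GMu Y H)
  show ?case
  proof (cases "X \<noteq> Y \<and> X \<in> gfv H")
    case True
    then have "proj (GMu Y H) p = PMu Y (proj H p)" by auto
    with True GMu show ?thesis by simp
  next
    case False
    then show ?thesis by (auto simp: gsubst_id)
  qed
qed auto

section \<open>The invariant\<close>

text \<open>The hypotheses of the theorem in a form that is inherited by reachable networks and by
  continuations of G.\<close>

definition net_inv :: "('p,'l) net \<Rightarrow> ('p,'l) gtype \<Rightarrow> bool" where
  "net_inv N G \<longleftrightarrow> race_free N \<and> wf_choices G \<and> (\<forall>t T. N t = Some T \<longrightarrow> good_thread T) \<and> net_typ_g N G"

lemma net_typ_g_iff:
  "net_typ_g N G \<longleftrightarrow> gfv G = {} \<and> pt G \<subseteq> dom N \<and>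
     (\<forall>t T. N t = Some T \<longrightarrow> tj T (proj G t) \<and> guarded (proj G t))"
  unfolding net_typ_g_def net_typ_def by blast

lemma net_inv_D:
  assumes "net_inv N G"
  shows "race_free N" "wf_choices G" "gfv G = {}" "pt G \<subseteq> dom N"
    and "N t = Some T \<Longrightarrow> good_thread T"
    and "N t = Some T \<Longrightarrow> tj T (proj G t)"
    and "N t = Some T \<Longrightarrow> guarded (proj G t)"
  using assms unfolding net_inv_def net_typ_g_iff by blast+

lemma net_inv_init:
  assumes "is_netstate N" "race_free N" "wf_gtype G" "net_typ_g N G"
  shows "net_inv N G"
proof -
  have "good_thread T" if "N t = Some T" for t T
    using assms(1) that is_tstate_good_thread unfolding is_netstate_def by blast
  then show ?thesis using assms(2-4) wf_gtype_wf_choices unfolding net_inv_def by blast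
qed

lemma net_inv_GMu_unfold:
  assumes inv: "net_inv N (GMu X H)"
  shows "net_inv N (gsubst X (GMu X H) H)"
proof -
  let ?G = "GMu X H" and ?U = "gsubst X (GMu X H) H"
  have closed: "gfv ?G = {}" and wf: "wf_choices ?G" using net_inv_D[OF inv] by blast+
  have closed_U: "gfv ?U = {}" using gfv_gsubst[of X ?G H] closed by auto
  have wf_U: "wf_choices ?U" using wf wf_choices_gsubst[of H ?G X] by simp
  have pt_U: "pt ?U \<subseteq> pt H" using pt_gsubst[of X ?G H] by simp
  have "tj T (proj ?U t) \<and> guarded (proj ?U t)" if Nt: "N t = Some T" for t T
  proof (cases "t \<in> pt H")
    case True
    then have proj_G: "proj ?G t = PMu X (proj H t)" by simp
    have proj_U: "proj ?U t = psubst X (proj ?G t) (proj H t)" using True by (intro proj_gsubst) simp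
    have "pfv (proj ?G t) = {}" using pfv_proj[of ?G t] closed by blast
    moreover have "tj T (proj ?G t)" "guarded (proj ?G t)" using net_inv_D(6,7)[OF inv Nt] by blast+
    ultimately show ?thesis
      unfolding proj_U proj_G using tj_PMu_unfold guarded_psubst[of "proj H t"] by simp
  next
    case False
    then have "proj ?G t = PEnd" using closed by simp
    then have "tj T PEnd" using net_inv_D(6)[OF inv Nt] by simp
    moreover have "end_like (proj ?U t)" using False pt_U closed_U wf_U end_like_proj[of t ?U] by blast
    ultimately show ?thesis using tj_end_like end_like_guarded by blast
  qed
  moreover have "pt ?U \<subseteq> dom N" using pt_U net_inv_D(4)[OF inv] by auto
  ultimately show ?thesis using inv closed_U wf_U unfolding net_inv_def net_typ_g_iff by blast
qed

lemma output_depth_GMu_unfold: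
  assumes inv: "net_inv N (GMu X H)" and Np: "N p = Some (TPend q l Q)"
  shows "output_depth p (gsubst X (GMu X H) H) < output_depth p (GMu X H)"
proof -
  have typed: "tj (TPend q l Q) (proj (GMu X H) p)" and gd: "guarded (proj (GMu X H) p)"
    using net_inv_D(6,7)[OF inv Np] by blast+
  have "p \<in> pt H"
  proof (rule ccontr)
    assume "p \<notin> pt H"
    then have "proj (GMu X H) p = PEnd" using net_inv_D(3)[OF inv] by simp
    then show False using typed by (simp add: tj_mismatch)
  qed
  then have "\<not> unguarded X (proj H p)" using gd by simp
  then show ?thesis by (simp add: output_depth_gsubst)
qed

lemma net_inv_branch_guarded:
  "net_inv N (GChoice r gbs) \<Longrightarrow> N t = Some T \<Longrightarrow> (s, m, H) \<in> set gbs \<Longrightarrow> guarded (proj H t)"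
  using net_inv_D(7) guarded_proj_GChoice by fastforce

section \<open>Committing to a branch\<close>

fun out_branches :: "('p,'l) thread \<Rightarrow> ('p \<times> 'l \<times> ('p,'l) thread) list" where
  "out_branches (TSend bs) = bs"
| "out_branches (TPend q l P) = [(q, l, P)]"
| "out_branches _ = []"

lemma out_branches_good:
  "good_thread T \<Longrightarrow> (s, m, R) \<in> set (out_branches T) \<Longrightarrow> good_thread R"
  by (cases T) (auto intro: good_thread_continuation)

lemma out_branches_nreach:
  assumes "N t = Some T" "(s, m, R) \<in> set (out_branches T)"
  shows "nreach N (N(t \<mapsto> TPend s m R))"
proof (cases T)
  case (TSend bs)
  then obtain k where "k < length bs" "bs ! k = (s, m, R)"
    using assms(2) by (auto simp: in_set_conv_nth)
  then have "nstep N Tau (N(t \<mapsto> TPend s m R))"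
    using nstep.choice assms(1) TSend by fastforce
  then show ?thesis using nreach_refl nreach_step by blast
qed (use assms in \<open>auto simp: map_upd_triv nreach_refl\<close>)

lemma tj_PSend_out_branches_D:
  assumes "tj T (PSend cs)" "good_thread T" "\<forall>X P. T \<noteq> TMu X P"
  obtains f where "out_branches T \<noteq> []" "inj_on f {..<length (out_branches T)}"
    "\<And>i s m R. i < length (out_branches T) \<Longrightarrow> out_branches T ! i = (s, m, R) \<Longrightarrow>
       f i < length cs \<and> (\<exists>C. cs ! f i = (s, m, C) \<and> tj R C)"
proof (cases T)
  case (TSend bs)
  then show ?thesis
    using that tj_TSend_PSend[OF assms(1)[unfolded TSend]] assms(2)
    by (fastforce simp: good_thread_def intro: prod_eqI)
next
  case (TPend q l P)
  obtain k C where "k < length cs" "cs ! k = (q, l, C)" "tj P C"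
    using tj_TPend_PSend[of q l P cs] assms(1) TPend by auto
  then show ?thesis by (intro that[of "\<lambda>_. k"]) (auto simp: TPend lessThan_Suc)
next
  case TVar
  then show ?thesis using assms(2) by (simp add: good_thread_def)
qed (use assms in \<open>auto simp: tj_mismatch\<close>)

lemma tj_PSend_out_branches_I:
  assumes "out_branches T \<noteq> []" "length cs = length (out_branches T)"
    and "\<And>i s m R. i < length cs \<Longrightarrow> out_branches T ! i = (s, m, R) \<Longrightarrow> \<exists>C. cs ! i = (s, m, C) \<and> tj R C"
  shows "tj T (PSend cs)"
proof (cases T)
  case (TSend bs)
  show ?thesis unfolding TSend
  proof (rule tj.send[of id])
    show "\<forall>i<length bs. id i < length cs \<and> fst (cs ! id i) = fst (bs ! i)
        \<and> fst (snd (cs ! id i)) = fst (snd (bs ! i)) \<and> tj (snd (snd (bs ! i))) (snd (snd (cs ! id i)))"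
      using assms(2,3) TSend by (metis id_apply out_branches.simps(1) prod.collapse fst_conv snd_conv)
  qed simp
next
  case (TPend q l R)
  obtain C where "cs ! 0 = (q, l, C)" "tj R C"
    using assms(2) assms(3)[of 0 q l R] TPend by auto
  moreover have "length cs = 1" using assms(2) TPend by simp
  ultimately show ?thesis unfolding TPend by (intro tj.pend[of 0]) auto
qed (use assms in auto)

lemma tj_PRecv_unfolds_to:
  assumes "tj T (PRecv r m C)" "good_thread T"
  obtains sbs S where "unfolds_to T (TRecv sbs)" "(r, m, S) \<in> set sbs" "tj S C" "good_thread S"
proof -
  obtain T' where T': "unfolds_to T T'" "good_thread T'" "\<forall>X P. T' \<noteq> TMu X P"
    using unfolds_to_non_mu assms(2) by blast
  have typed: "tj T' (PRecv r m C)" using assms(1) unfolds_to_tj_iff[OF T'(1)] by simp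
  have "\<exists>sbs. T' = TRecv sbs"
    by (cases T') (use typed T'(2,3) in \<open>simp_all add: tj_mismatch good_thread_def\<close>)
  then obtain sbs where sbs: "T' = TRecv sbs" ..
  then obtain k S where k: "k < length sbs" "sbs ! k = (r, m, S)" and S: "tj S C"
    using tj_TRecv_PRecv[OF typed[unfolded sbs]] by blast
  have mem: "(r, m, S) \<in> set sbs" using k by (metis nth_mem)
  show ?thesis
    by (rule that[OF T'(1)[unfolded sbs] mem S good_thread_continuation(2)[OF T'(2)[unfolded sbs] mem]])
qed

lemma GChoice_sender_branches:
  assumes inv: "net_inv N (GChoice r gbs)" and Nr: "N r = Some Tr"
  obtains n f s m R where "n \<noteq> 0" "inj_on f {..<n}"
    and "\<And>j. j < n \<Longrightarrow> f j < length gbs \<and> fst (gbs ! f j) = s j \<and> fst (snd (gbs ! f j)) = m j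
       \<and> tj (R j) (proj (snd (snd (gbs ! f j))) r) \<and> good_thread (R j)
       \<and> nreach N (N(r \<mapsto> TPend (s j) (m j) (R j)))"
    and "\<And>H. (\<And>j. j < n \<Longrightarrow> tj (R j) (proj (H j) r)) \<Longrightarrow>
       tj Tr (PSend (map (\<lambda>j. (s j, m j, proj (H j) r)) [0..<n]))"
proof -
  obtain Tr' where Tr': "unfolds_to Tr Tr'" "good_thread Tr'" "\<forall>X P. Tr' \<noteq> TMu X P"
    using unfolds_to_non_mu[OF net_inv_D(5)[OF inv Nr]] by blast
  let ?cs = "map (\<lambda>(s, m, H). (s, m, proj H r)) gbs"
  have "tj Tr' (PSend ?cs)"
    using net_inv_D(6)[OF inv Nr] unfolds_to_tj_iff[OF Tr'(1)] by simp
  then obtain f where f: "out_branches Tr' \<noteq> []" "inj_on f {..<length (out_branches Tr')}"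
    "\<And>i s m R. i < length (out_branches Tr') \<Longrightarrow> out_branches Tr' ! i = (s, m, R) \<Longrightarrow>
       f i < length ?cs \<and> (\<exists>C. ?cs ! f i = (s, m, C) \<and> tj R C)"
    using tj_PSend_out_branches_D[OF _ Tr'(2,3)] by blast
  have reach: "nreach N (N(r \<mapsto> Tr'))" using unfolds_to_nreach[of Tr Tr' N r, OF Tr'(1) Nr] .
  define n where "n = length (out_branches Tr')"
  define s m R where "s j = fst (out_branches Tr' ! j)" and "m j = fst (snd (out_branches Tr' ! j))"
    and "R j = snd (snd (out_branches Tr' ! j))" for j
  have out_j: "out_branches Tr' ! j = (s j, m j, R j)" for j by (simp add: s_def m_def R_def)
  show ?thesis
  proof (rule that[of n f s m R])
    show "n \<noteq> 0" "inj_on f {..<n}" using f(1,2) unfolding n_def by simp_all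
  next
    fix j assume "j < n"
    then have j: "j < length (out_branches Tr')" unfolding n_def .
    then have mem: "(s j, m j, R j) \<in> set (out_branches Tr')" by (metis nth_mem out_j)
    obtain C where C: "f j < length gbs" "?cs ! f j = (s j, m j, C)" "tj (R j) C"
      using f(3)[OF j out_j] by auto
    then have "fst (gbs ! f j) = s j \<and> fst (snd (gbs ! f j)) = m j \<and> tj (R j) (proj (snd (snd (gbs ! f j))) r)"
      by (cases "gbs ! f j") auto
    moreover have "good_thread (R j)" using out_branches_good[OF Tr'(2) mem] .
    moreover have "nreach N (N(r \<mapsto> TPend (s j) (m j) (R j)))"
      using nreach_trans[OF reach out_branches_nreach[of "N(r \<mapsto> Tr')" r Tr' "s j" "m j" "R j"]] mem by simp
    ultimately show "f j < length gbs \<and> fst (gbs ! f j) = s j \<and> fst (snd (gbs ! f j)) = m j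
       \<and> tj (R j) (proj (snd (snd (gbs ! f j))) r) \<and> good_thread (R j)
       \<and> nreach N (N(r \<mapsto> TPend (s j) (m j) (R j)))"
      using C(1) by blast
  next
    fix H assume "\<And>j. j < n \<Longrightarrow> tj (R j) (proj (H j) r)"
    then have "tj Tr' (PSend (map (\<lambda>j. (s j, m j, proj (H j) r)) [0..<n]))"
      using f(1) by (intro tj_PSend_out_branches_I) (auto simp: n_def out_j)
    then show "tj Tr (PSend (map (\<lambda>j. (s j, m j, proj (H j) r)) [0..<n]))"
      using unfolds_to_tj_iff[OF Tr'(1)] by simp
  qed
qed

lemma net_inv_GChoice_branch:
  assumes inv: "net_inv N (GChoice r gbs)" and mem: "(s, m, H) \<in> set gbs"
    and reach: "nreach N (N(r \<mapsto> R, s \<mapsto> S))"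
    and R: "tj R (proj H r)" "good_thread R" and S: "tj S (proj H s)" "good_thread S"
  shows "net_inv (N(r \<mapsto> R, s \<mapsto> S)) H"
proof -
  have sr: "s \<noteq> r" using net_inv_D(2)[OF inv] mem by auto
  have pt: "r \<in> dom N" "s \<in> dom N" "pt H \<subseteq> dom N"
    using net_inv_D(4)[OF inv] pt_GChoice_branch[OF mem] by blast+
  have "gfv H = {}" "wf_choices H" using net_inv_D(2,3)[OF inv] mem by auto
  moreover have "good_thread T \<and> tj T (proj H t) \<and> guarded (proj H t)"
    if Mt: "(N(r \<mapsto> R, s \<mapsto> S)) t = Some T" for t T
  proof (cases "t = r \<or> t = s")
    case True
    moreover have "guarded (proj H r)" "guarded (proj H s)"
      using net_inv_branch_guarded[OF inv _ mem] pt(1,2) by blast+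
    ultimately show ?thesis using Mt R S sr by auto
  next
    case False
    then have Nt: "N t = Some T" using Mt by simp
    have "tj T (if t = s then PRecv r m (proj H t) else proj H t)"
      using tj_proj_GChoice_branch[OF _ net_inv_D(6)[OF inv Nt] mem] False by blast
    then show ?thesis
      using net_inv_D(5)[OF inv Nt] net_inv_branch_guarded[OF inv Nt mem] False by simp
  qed
  moreover have "race_free (N(r \<mapsto> R, s \<mapsto> S))" using race_free_nreach[OF net_inv_D(1)[OF inv] reach] .
  moreover have "pt H \<subseteq> dom (N(r \<mapsto> R, s \<mapsto> S))" using pt(3) by auto
  ultimately show ?thesis unfolding net_inv_def net_typ_g_iff by blast
qed

lemma net_inv_GChoice_comm:
  assumes inv: "net_inv N (GChoice r gbs)" and mem: "(s, m, G) \<in> set gbs"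
    and R: "nreach N (N(r \<mapsto> TPend s m R))" "tj R (proj G r)" "good_thread R"
  obtains Ts sbs S where "N s = Some Ts" "unfolds_to Ts (TRecv sbs)" "(r, m, S) \<in> set sbs"
    "net_inv (N(r \<mapsto> R, s \<mapsto> S)) G"
proof -
  let ?N2 = "N(r \<mapsto> TPend s m R)"
  have sr: "s \<noteq> r" using net_inv_D(2)[OF inv] mem by auto
  have "s \<in> dom N" using net_inv_D(4)[OF inv] pt_GChoice_branch[OF mem] by blast
  then obtain Ts where Ns: "N s = Some Ts" by blast
  have "tj Ts (PRecv r m (proj G s))"
    using tj_proj_GChoice_branch[OF sr net_inv_D(6)[OF inv Ns] mem] by simp
  then obtain sbs S where S: "unfolds_to Ts (TRecv sbs)" "(r, m, S) \<in> set sbs" "tj S (proj G s)" "good_thread S"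
    using tj_PRecv_unfolds_to[OF _ net_inv_D(5)[OF inv Ns]] by blast
  have "nreach N (N(r \<mapsto> R, s \<mapsto> S))"
  proof -
    have unfolded: "nreach ?N2 (?N2(s \<mapsto> TRecv sbs))"
      using unfolds_to_nreach[of Ts "TRecv sbs" ?N2 s] S(1) Ns sr by simp
    obtain k where "k < length sbs" "sbs ! k = (r, m, S)"
      using S(2) by (metis in_set_conv_nth)
    then have "nstep (?N2(s \<mapsto> TRecv sbs)) (Comm r m s) (?N2(s \<mapsto> TRecv sbs, r \<mapsto> R, s \<mapsto> S))"
      by (intro nstep.comm) (use sr in auto)
    moreover have "?N2(s \<mapsto> TRecv sbs, r \<mapsto> R, s \<mapsto> S) = N(r \<mapsto> R, s \<mapsto> S)"
      using sr by (intro ext) simp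
    ultimately show ?thesis using nreach_step[OF nreach_trans[OF R(1) unfolded]] by simp
  qed
  then have "net_inv (N(r \<mapsto> R, s \<mapsto> S)) G"
    using net_inv_GChoice_branch[OF inv mem] R(2,3) S(3,4) by blast
  then show ?thesis by (rule that[OF Ns S(1,2)])
qed

section \<open>Lifting a communication to the global type\<close>

lemma comm_gstep_GChoice_sender:
  assumes inv: "net_inv N (GChoice p gbs)"
    and Np: "N p = Some (TPend q l Q)" and Nq: "N q = Some (TRecv bs)"
    and k: "k < length bs" "bs ! k = (p, l, P)"
  shows "\<exists>G'. gstep (GChoice p gbs) (p, l, q) G' \<and> net_typ_g (N(p \<mapsto> Q, q \<mapsto> P)) G'"
proof -
  have pq: "p \<noteq> q" using Np Nq by auto
  have "tj (TPend q l Q) (PSend (map (\<lambda>(s, m, H). (s, m, proj H p)) gbs))"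
    using net_inv_D(6)[OF inv Np] by simp
  from tj_TPend_PSend[OF this] obtain i C
    where i: "i < length gbs" "map (\<lambda>(s, m, H). (s, m, proj H p)) gbs ! i = (q, l, C)" "tj Q C"
    by auto
  then obtain H where H: "gbs ! i = (q, l, H)" "tj Q (proj H p)" by (cases "gbs ! i") auto
  have mem: "(q, l, H) \<in> set gbs" using i(1) H(1) by (metis nth_mem)
  have "tj (TRecv bs) (PRecv p l (proj H q))"
    using tj_proj_GChoice_branch[OF pq[symmetric] net_inv_D(6)[OF inv Nq] mem] by simp
  from tj_TRecv_PRecv[OF this] obtain k' P'
    where k': "k' < length bs" "bs ! k' = (p, l, P')" "tj P' (proj H q)"
    by blast
  \<comment> \<open>q may have several (p, l)-branches; race freedom makes them lead to the same network\<close>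
  have "N(p \<mapsto> Q, q \<mapsto> P) = N(p \<mapsto> Q, q \<mapsto> P')"
    using race_free_comm_unique[OF net_inv_D(1)[OF inv] nstep.comm[OF Np Nq k] nstep.comm[OF Np Nq k'(1,2)]]
    by (rule conjunct2)
  then have P: "tj P (proj H q)" using k'(3) by (metis fun_upd_same option.inject)
  have "tj T (proj H t) \<and> guarded (proj H t)" if Mt: "(N(p \<mapsto> Q, q \<mapsto> P)) t = Some T" for t T
  proof -
    obtain T0 where Nt: "N t = Some T0" using Mt Np Nq by (cases "t = p \<or> t = q") auto
    have "tj T (proj H t)"
    proof (cases "t = p \<or> t = q")
      case True
      then show ?thesis using Mt H(2) P pq by auto
    next
      case False
      then show ?thesis
        using Mt Nt tj_proj_GChoice_branch[OF _ net_inv_D(6)[OF inv Nt] mem] by simp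
    qed
    then show ?thesis using net_inv_branch_guarded[OF inv Nt mem] by blast
  qed
  moreover have "gfv H = {}" using net_inv_D(3)[OF inv] mem by auto
  moreover have "pt H \<subseteq> dom N" using net_inv_D(4)[OF inv] pt_GChoice_branch[OF mem] by blast
  ultimately have "net_typ_g (N(p \<mapsto> Q, q \<mapsto> P)) H"
    unfolding net_typ_g_iff using Np Nq by auto
  then show ?thesis using gstep.top[OF i(1) H(1)] by blast
qed

lemma gstep_GChoice_subfamily:
  assumes "n \<noteq> 0" "inj_on f {..<n}" "p \<noteq> r" "q \<noteq> r"
    and "\<And>j. j < n \<Longrightarrow> f j < length bs \<and> bs ! f j = (s j, m j, G j) \<and> gstep (G j) (p, l, q) (H j)
       \<and> s j \<noteq> p \<and> s j \<noteq> q"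
  shows "gstep (GChoice r bs) (p, l, q) (GChoice r (map (\<lambda>j. (s j, m j, H j)) [0..<n]))"
proof -
  let ?is = "map f [0..<n]"
  have "gstep (GChoice r bs) (p, l, q)
      (GChoice r (map (\<lambda>j. (fst (bs ! (?is ! j)), fst (snd (bs ! (?is ! j))), map H [0..<n] ! j)) [0..<length ?is]))"
  proof (rule gstep.deep)
    show "distinct ?is" using assms(2) by (simp add: distinct_map lessThan_atLeast0)
  qed (use assms in force)+
  moreover have "map (\<lambda>j. (fst (bs ! (?is ! j)), fst (snd (bs ! (?is ! j))), map H [0..<n] ! j)) [0..<length ?is]
      = map (\<lambda>j. (s j, m j, H j)) [0..<n]"
    using assms(5) by (intro map_cong) simp_all
  ultimately show ?thesis by (simp only:)
qed

lemma net_typ_g_GChoice: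
  assumes Mr: "M r = Some Tr" "tj Tr (PSend (map (\<lambda>j. (s j, m j, proj (H j) r)) [0..<n]))"
    and branch: "\<And>j. j < n \<Longrightarrow> s j \<noteq> r \<and> (\<exists>T. M (s j) = Some T \<and> tj T (PRecv r (m j) (proj (H j) (s j))))
       \<and> net_typ_g (M(r \<mapsto> R j, s j \<mapsto> S j)) (H j)"
  shows "net_typ_g M (GChoice r (map (\<lambda>j. (s j, m j, H j)) [0..<n]))"
proof -
  let ?G = "GChoice r (map (\<lambda>j. (s j, m j, H j)) [0..<n])"
  have dom: "dom (M(r \<mapsto> R j, s j \<mapsto> S j)) = dom M" if "j < n" for j
    using Mr(1) branch[OF that] by auto
  have Hj: "gfv (H j) = {}" "pt (H j) \<subseteq> dom M"
    "\<And>t T. (M(r \<mapsto> R j, s j \<mapsto> S j)) t = Some T \<Longrightarrow> tj T (proj (H j) t)"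
    "\<And>t. t \<in> dom M \<Longrightarrow> guarded (proj (H j) t)" if j: "j < n" for j
  proof -
    from branch[OF j] have typed: "net_typ_g (M(r \<mapsto> R j, s j \<mapsto> S j)) (H j)" by blast
    then show "gfv (H j) = {}" "pt (H j) \<subseteq> dom M"
      using dom[OF j] unfolding net_typ_g_iff by simp_all
    show "tj T (proj (H j) t)" if "(M(r \<mapsto> R j, s j \<mapsto> S j)) t = Some T" for t T
      using typed that unfolding net_typ_g_iff by blast
    show "guarded (proj (H j) t)" if "t \<in> dom M" for t
      using typed that dom[OF j] unfolding net_typ_g_iff by (metis domD)
  qed
  have "gfv ?G = {}" using Hj(1) by auto
  moreover have "pt ?G \<subseteq> dom M"
  proof
    fix x assume "x \<in> pt ?G"
    then obtain j where "j < n" "x = r \<or> x = s j \<or> x \<in> pt (H j)"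
      unfolding pt_GChoice by auto
    then show "x \<in> dom M" using Hj(2) Mr(1) branch by blast
  qed
  moreover have "tj T (proj ?G t) \<and> guarded (proj ?G t)" if Mt: "M t = Some T" for t T
  proof -
    have "t \<in> dom M" using Mt by blast
    then have "guarded (proj ?G t)" using Hj(4) by (simp add: guarded_proj_GChoice)
    moreover have "tj T (proj ?G t)"
    proof (cases "t = r")
      case True
      then show ?thesis using Mr Mt by (simp add: comp_def)
    next
      case False
      have "tj T (if t = s j then PRecv r (m j) (proj (H j) t) else proj (H j) t)" if "j < n" for j
      proof (cases "t = s j")
        case True
        then show ?thesis using branch[OF \<open>j < n\<close>] Mt by auto
      next
        case False
        then show ?thesis using Hj(3)[OF \<open>j < n\<close>, of t T] Mt \<open>t \<noteq> r\<close> by simp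
      qed
      with False show ?thesis unfolding tj_proj_GChoice_other[OF False] by auto
    qed
    ultimately show ?thesis by blast
  qed
  ultimately show ?thesis unfolding net_typ_g_iff by blast
qed

lemma GChoice_receiver_not_comm:
  assumes inv: "net_inv N (GChoice r gbs)" and rp: "r \<noteq> p" and rq: "r \<noteq> q"
    and Np: "N p = Some (TPend q l Q)" and Nq: "N q = Some (TRecv bs)"
    and k: "k < length bs" "bs ! k = (p, l, P)"
    and mem: "(s, m, G) \<in> set gbs" and reach: "nreach N (N(r \<mapsto> TPend s m R))"
  shows "s \<noteq> p \<and> s \<noteq> q"
proof (intro conjI)
  let ?N2 = "N(r \<mapsto> TPend s m R)"
  show "s \<noteq> p"
  proof
    assume "s = p"
    then have "tj (TPend q l Q) (PRecv r m (proj G p))"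
      using tj_proj_GChoice_branch[OF rp[symmetric] net_inv_D(6)[OF inv Np] mem] by simp
    then show False by (simp add: tj_mismatch)
  qed
  show "s \<noteq> q"
  proof
    assume sq: "s = q"
    then have "tj (TRecv bs) (PRecv r m (proj G q))"
      using tj_proj_GChoice_branch[OF rq[symmetric] net_inv_D(6)[OF inv Nq] mem] by simp
    from tj_TRecv_PRecv[OF this] obtain k' P' where k': "k' < length bs" "bs ! k' = (r, m, P')"
      by blast
    \<comment> \<open>once r has committed to its output to q, p and r race for q\<close>
    have "?N2 p = Some (TPend q l Q)" "?N2 q = Some (TRecv bs)" "?N2 r = Some (TPend q m R)"
      using Np Nq rp rq sq by auto
    then have "p = r"
      using race_free_comm_unique[OF race_free_nreach[OF net_inv_D(1)[OF inv] reach]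
          nstep.comm[of ?N2 p q l Q bs k P] nstep.comm[of ?N2 r q m R bs k' P']] k k'
      by blast
    with rp show False by simp
  qed
qed

lemma comm_gstep_GChoice_branch:
  assumes inv: "net_inv N (GChoice r gbs)" and rp: "r \<noteq> p" and rq: "r \<noteq> q"
    and Np: "N p = Some (TPend q l Q)" and Nq: "N q = Some (TRecv bs)"
    and k: "k < length bs" "bs ! k = (p, l, P)"
    and mem: "(s, m, G) \<in> set gbs"
    and R: "nreach N (N(r \<mapsto> TPend s m R))" "tj R (proj G r)" "good_thread R"
    and IH: "\<And>N' G'. output_depth p G' < output_depth p (GChoice r gbs) \<Longrightarrow> net_inv N' G' \<Longrightarrow>
       N' p = Some (TPend q l Q) \<Longrightarrow> N' q = Some (TRecv bs) \<Longrightarrow>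
       \<exists>G''. gstep G' (p, l, q) G'' \<and> net_typ_g (N'(p \<mapsto> Q, q \<mapsto> P)) G''"
  shows "\<exists>H S. gstep G (p, l, q) H \<and> s \<noteq> p \<and> s \<noteq> q \<and> s \<noteq> r
           \<and> (\<exists>T. N s = Some T \<and> tj T (PRecv r m (proj H s)))
           \<and> net_typ_g ((N(p \<mapsto> Q, q \<mapsto> P))(r \<mapsto> R, s \<mapsto> S)) H"
proof -
  have sr: "s \<noteq> r" using net_inv_D(2)[OF inv] mem by auto
  have sp: "s \<noteq> p" and sq: "s \<noteq> q"
    using GChoice_receiver_not_comm[OF inv rp rq Np Nq k mem R(1)] by blast+
  obtain Ts sbs S where Ns: "N s = Some Ts" and S: "unfolds_to Ts (TRecv sbs)" "(r, m, S) \<in> set sbs"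
    and inv': "net_inv (N(r \<mapsto> R, s \<mapsto> S)) G"
    using net_inv_GChoice_comm[OF inv mem R] by blast
  define Ni where "Ni = N(r \<mapsto> R, s \<mapsto> S)"
  have "net_inv Ni G" using inv' unfolding Ni_def .
  moreover have "Ni p = Some (TPend q l Q)" "Ni q = Some (TRecv bs)"
    using Np Nq rp rq sp sq unfolding Ni_def by auto
  moreover have "output_depth p G < output_depth p (GChoice r gbs)"
    using output_depth_branch[OF rp mem sp] .
  ultimately obtain H where H: "gstep G (p, l, q) H" "net_typ_g (Ni(p \<mapsto> Q, q \<mapsto> P)) H"
    using IH by blast
  have "tj Ts (PRecv r m (proj H s))"
  proof -
    have "(Ni(p \<mapsto> Q, q \<mapsto> P)) s = Some S" using sp sq unfolding Ni_def by simp
    then have "tj S (proj H s)" using H(2) unfolding net_typ_g_iff by blast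
    moreover obtain k' where "k' < length sbs" "sbs ! k' = (r, m, S)"
      using S(2) by (metis in_set_conv_nth)
    ultimately have "tj (TRecv sbs) (PRecv r m (proj H s))" by (intro tj.recv)
    then show ?thesis using unfolds_to_tj_iff[OF S(1)] by simp
  qed
  moreover have "Ni(p \<mapsto> Q, q \<mapsto> P) = (N(p \<mapsto> Q, q \<mapsto> P))(r \<mapsto> R, s \<mapsto> S)"
    unfolding Ni_def using rp rq sp sq by (intro ext) simp
  ultimately show ?thesis using H sp sq sr Ns by auto
qed

lemma bounded_choice2:
  assumes "\<forall>j<(n::nat). \<exists>x y. P j x y"
  obtains f g where "\<And>j. j < n \<Longrightarrow> P j (f j) (g j)"
  using assms by metis

lemma comm_gstep_GChoice_other:
  assumes inv: "net_inv N (GChoice r gbs)" and rp: "r \<noteq> p"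
    and Np: "N p = Some (TPend q l Q)" and Nq: "N q = Some (TRecv bs)"
    and k: "k < length bs" "bs ! k = (p, l, P)"
    and IH: "\<And>N' G'. output_depth p G' < output_depth p (GChoice r gbs) \<Longrightarrow> net_inv N' G' \<Longrightarrow>
       N' p = Some (TPend q l Q) \<Longrightarrow> N' q = Some (TRecv bs) \<Longrightarrow>
       \<exists>G''. gstep G' (p, l, q) G'' \<and> net_typ_g (N'(p \<mapsto> Q, q \<mapsto> P)) G''"
  shows "\<exists>G'. gstep (GChoice r gbs) (p, l, q) G' \<and> net_typ_g (N(p \<mapsto> Q, q \<mapsto> P)) G'"
proof -
  let ?M = "N(p \<mapsto> Q, q \<mapsto> P)"
  have rq: "r \<noteq> q"
  proof
    assume "r = q"
    then have "tj (TRecv bs) (PSend (map (\<lambda>(s, m, H). (s, m, proj H r)) gbs))"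
      using net_inv_D(6)[OF inv Nq] by simp
    then show False by (simp add: tj_mismatch)
  qed
  have "gbs \<noteq> []" using net_inv_D(2)[OF inv] by simp
  then have "r \<in> dom N" using net_inv_D(4)[OF inv] pt_GChoice[of r r gbs] by blast
  then obtain Tr where Nr: "N r = Some Tr" by blast
  obtain n f s m R where n: "n \<noteq> 0" "inj_on f {..<n}"
    and sender: "\<And>j. j < n \<Longrightarrow> f j < length gbs \<and> fst (gbs ! f j) = s j \<and> fst (snd (gbs ! f j)) = m j
       \<and> tj (R j) (proj (snd (snd (gbs ! f j))) r) \<and> good_thread (R j)
       \<and> nreach N (N(r \<mapsto> TPend (s j) (m j) (R j)))"
    and typed_r: "\<And>H. (\<And>j. j < n \<Longrightarrow> tj (R j) (proj (H j) r)) \<Longrightarrow>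
       tj Tr (PSend (map (\<lambda>j. (s j, m j, proj (H j) r)) [0..<n]))"
    using GChoice_sender_branches[OF inv Nr] by blast
  define G where "G j = snd (snd (gbs ! f j))" for j
  have branch_j: "f j < length gbs" "gbs ! f j = (s j, m j, G j)" "(s j, m j, G j) \<in> set gbs"
    if "j < n" for j
    using sender[OF that] nth_mem[of "f j" gbs] unfolding G_def by (metis prod.collapse)+
  have "\<forall>j<n. \<exists>H S. gstep (G j) (p, l, q) H \<and> s j \<noteq> p \<and> s j \<noteq> q \<and> s j \<noteq> r
      \<and> (\<exists>T. N (s j) = Some T \<and> tj T (PRecv r (m j) (proj H (s j))))
      \<and> net_typ_g (?M(r \<mapsto> R j, s j \<mapsto> S)) H"
    using comm_gstep_GChoice_branch[OF inv rp rq Np Nq k branch_j(3)] sender IH unfolding G_def by blast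
  then obtain H S where HS: "\<And>j. j < n \<Longrightarrow> gstep (G j) (p, l, q) (H j) \<and> s j \<noteq> p \<and> s j \<noteq> q \<and> s j \<noteq> r
      \<and> (\<exists>T. N (s j) = Some T \<and> tj T (PRecv r (m j) (proj (H j) (s j))))
      \<and> net_typ_g (?M(r \<mapsto> R j, s j \<mapsto> S j)) (H j)"
    by (rule bounded_choice2) blast
  have "gstep (GChoice r gbs) (p, l, q) (GChoice r (map (\<lambda>j. (s j, m j, H j)) [0..<n]))"
    using n rp rq HS branch_j by (intro gstep_GChoice_subfamily) auto
  moreover have "net_typ_g ?M (GChoice r (map (\<lambda>j. (s j, m j, H j)) [0..<n]))"
  proof (rule net_typ_g_GChoice)
    show "?M r = Some Tr" using Nr rp rq by simp
    have "tj (R j) (proj (H j) r)" if "j < n" for j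
    proof -
      have "(?M(r \<mapsto> R j, s j \<mapsto> S j)) r = Some (R j)" using HS[OF that] by auto
      then show ?thesis using HS[OF that] unfolding net_typ_g_iff by blast
    qed
    then show "tj Tr (PSend (map (\<lambda>j. (s j, m j, proj (H j) r)) [0..<n]))" by (rule typed_r)
    show "s j \<noteq> r \<and> (\<exists>T. ?M (s j) = Some T \<and> tj T (PRecv r (m j) (proj (H j) (s j))))
        \<and> net_typ_g (?M(r \<mapsto> R j, s j \<mapsto> S j)) (H j)" if "j < n" for j
      using HS[OF that] by auto
  qed
  ultimately show ?thesis by blast
qed

lemma comm_gstep:
  assumes "net_inv N G" "N p = Some (TPend q l Q)" "N q = Some (TRecv bs)"
    and "k < length bs" "bs ! k = (p, l, P)"
  shows "\<exists>G'. gstep G (p, l, q) G' \<and> net_typ_g (N(p \<mapsto> Q, q \<mapsto> P)) G'"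
  using assms
proof (induction "output_depth p G" arbitrary: N G rule: less_induct)
  case less
  note inv = less.prems(1) and Np = less.prems(2) and Nq = less.prems(3) and k = less.prems(4,5)
  show ?case
  proof (cases G)
    case GEnd
    then show ?thesis using net_inv_D(6)[OF inv Np] by (simp add: tj_mismatch)
  next
    case (GVar X)
    then show ?thesis using net_inv_D(3)[OF inv] by simp
  next
    case (GMu X H)
    have inv': "net_inv N (gsubst X (GMu X H) H)"
      using net_inv_GMu_unfold[OF inv[unfolded GMu]] .
    have "output_depth p (gsubst X (GMu X H) H) < output_depth p G"
      using output_depth_GMu_unfold[OF inv[unfolded GMu] Np] unfolding GMu .
    from less.hyps[OF this inv' Np Nq k] obtain G'
      where "gstep (gsubst X (GMu X H) H) (p, l, q) G'" "net_typ_g (N(p \<mapsto> Q, q \<mapsto> P)) G'"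
      by blast
    then show ?thesis unfolding GMu by (blast intro: gstep.mu)
  next
    case (GChoice r gbs)
    show ?thesis
    proof (cases "r = p")
      case True
      show ?thesis using comm_gstep_GChoice_sender[OF inv[unfolded GChoice True] Np Nq k]
        unfolding GChoice True .
    next
      case False
      show ?thesis unfolding GChoice
        by (rule comm_gstep_GChoice_other[OF inv[unfolded GChoice] False Np Nq k less.hyps[OF _ _ _ _ k]])
          (simp_all add: GChoice)
    qed
  qed
qed

theorem mainTheorem9:
  fixes N M :: "('p,'l) net" and G :: "('p,'l) gtype"
  assumes "is_netstate N"
    and "race_free N"
    and "wf_gtype G"
    and "net_typ_g N G"
    and "nstep N (Comm p l q) M"
  shows "\<exists>G'. gstep G (p, l, q) G' \<and> net_typ_g M G'"
proof -
  from assms(5) obtain Q bs k P where "N p = Some (TPend q l Q)" "N q = Some (TRecv bs)"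
      "k < length bs" "bs ! k = (p, l, P)" "M = N(p \<mapsto> Q, q \<mapsto> P)"
    by (cases rule: nstep.cases) auto
  then show ?thesis using comm_gstep[OF net_inv_init[OF assms(1-4)]] by simp
qed

end
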